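(* Let $n,p,K$ be positive integers with $K\ge 2$, and let $\boldsymbol{x}_1,\ldots,\boldsymbol{x}_n\in\mathbb{R}^p$ with $\boldsymbol{x}_i=(x_{i1},\ldots,x_{ip})^T$; set $x_{i0}=1$ for all $i$. A gating parameter is $\boldsymbol{w}=(w_{kj})_{1\le k\le K-1,\,0\le j\le p}$, where $w_{k0}\in\mathbb{R}$ and $\boldsymbol{w}_k=(w_{k1},\ldots,w_{kp})^T\in\mathbb{R}^p$. Define $$I_1(\boldsymbol{w}) = - \sum_{i=1}^n\log\Bigl[1+\sum_{k=1}^{K-1}e^{w_{k0}+\boldsymbol{x}_i^T \boldsymbol{w}_k}\Bigr].$$ Fix any $\boldsymbol{w}^{[s]}$, and set $C_i^{m} = 1+\sum_{k=1}^{K-1}e^{w_{k0}^{[s]}+\boldsymbol{x}_i^T \boldsymbol{w}_k^{[s]}}$ and $\pi_k(\boldsymbol{x}_i;\boldsymbol{w}^{[s]}) = e^{w_{k0}^{[s]}+\boldsymbol{x}_i^T \boldsymbol{w}_k^{[s]}}/C_i^m$. Define $$G_1(\boldsymbol{w}|\boldsymbol{w}^{[s]}) = \sum_{i=1}^n\Bigl[-\sum_{k=1}^{K-1}\frac{\pi_k(\boldsymbol{x}_i;\boldsymbol{w}^{[s]})}{p+1}\sum_{j=0}^p e^{(p+1)x_{ij}(w_{kj}-w_{kj}^{[s]})} - \log C_i^{m}+ 1- \frac{1}{C_i^{m}}\Bigr].$$ Then $I_1$ is a majorizer of $G_1(\cdot|\boldsymbol{w}^{[s]})$, i.e. $G_1(\cdot|\boldsymbol{w}^{[s]})$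 is a minorizing function of $I_1$ at $\boldsymbol{w}^{[s]}$: $I_1(\boldsymbol{w})\ge G_1(\boldsymbol{w}|\boldsymbol{w}^{[s]})$ for all $\boldsymbol{w}$, and $I_1(\boldsymbol{w}^{[s]}) = G_1(\boldsymbol{w}^{[s]}|\boldsymbol{w}^{[s]})$.
   Context: A function $G(x|x_m)$ is called a minorizing function of $F(x)$ at $x_m$ if $F(x)\ge G(x|x_m)$ for all $x$ and $F(x_m)=G(x_m|x_m)$. The function $I_1$ is the non-linear part of the expected complete-data log-likelihood of the softmax gating network $\pi_k(\boldsymbol{x};\boldsymbol{w})=\exp(w_{k0}+\boldsymbol{x}^T\boldsymbol{w}_k)/(1+\sum_{l=1}^{K-1}\exp(w_{l0}+\boldsymbol{x}^T\boldsymbol{w}_l))$ of a mixture-of-experts model with $K$ components. *)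

theory Defs
  imports "HOL-Analysis.Analysis"
begin

definition xaug :: "(nat \<Rightarrow> nat \<Rightarrow> real) \<Rightarrow> nat \<Rightarrow> nat \<Rightarrow> real" where
  "xaug x i j = (if j = 0 then 1 else x i j)"

definition lin :: "nat \<Rightarrow> (nat \<Rightarrow> nat \<Rightarrow> real) \<Rightarrow> (nat \<Rightarrow> nat \<Rightarrow> real) \<Rightarrow> nat \<Rightarrow> nat \<Rightarrow> real" where
  "lin p x w i k = w k 0 + (\<Sum>j=1..p. x i j * w k j)"

definition I1 :: "nat \<Rightarrow> nat \<Rightarrow> nat \<Rightarrow> (nat \<Rightarrow> nat \<Rightarrow> real) \<Rightarrow> (nat \<Rightarrow> nat \<Rightarrow> real) \<Rightarrow> real" where
  "I1 n p K x w = - (\<Sum>i=1..n. ln (1 + (\<Sum>k=1..K-1. exp (lin p x w i k))))"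

definition Cm :: "nat \<Rightarrow> nat \<Rightarrow> (nat \<Rightarrow> nat \<Rightarrow> real) \<Rightarrow> (nat \<Rightarrow> nat \<Rightarrow> real) \<Rightarrow> nat \<Rightarrow> real" where
  "Cm p K x ws i = 1 + (\<Sum>k=1..K-1. exp (lin p x ws i k))"

definition gate :: "nat \<Rightarrow> nat \<Rightarrow> (nat \<Rightarrow> nat \<Rightarrow> real) \<Rightarrow> (nat \<Rightarrow> nat \<Rightarrow> real) \<Rightarrow> nat \<Rightarrow> nat \<Rightarrow> real" where
  "gate p K x ws i k = exp (lin p x ws i k) / Cm p K x ws i"

definition G1 :: "nat \<Rightarrow> nat \<Rightarrow> nat \<Rightarrow> (nat \<Rightarrow> nat \<Rightarrow> real) \<Rightarrow> (nat \<Rightarrow> nat \<Rightarrow> real) \<Rightarrow> (nat \<Rightarrow> nat \<Rightarrow> real) \<Rightarrow> real" where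
  "G1 n p K x w ws = (\<Sum>i=1..n.
      - (\<Sum>k=1..K-1. gate p K x ws i k / real (p + 1) *
           (\<Sum>j=0..p. exp (real (p + 1) * xaug x i j * (w k j - ws k j))))
      - ln (Cm p K x ws i) + 1 - 1 / Cm p K x ws i)"

definition minorizes :: "('a \<Rightarrow> real) \<Rightarrow> ('a \<Rightarrow> real) \<Rightarrow> 'a \<Rightarrow> bool" where
  "minorizes G F xm \<longleftrightarrow> (\<forall>x. F x \<ge> G x) \<and> F xm = G xm"

end

theory Submission
  imports Defs
begin

text \<open>Two convexity inequalities give the minorizer. Concavity of \<open>ln\<close> at \<open>C\<close> gives
  \<open>-ln D \<ge> -ln C + 1 - D / C\<close>, and for \<open>D = 1 + \<Sum>\<^sub>k exp \<eta>\<^sub>k(w)\<close> the quotient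
  \<open>D / C\<close> equals \<open>1 / C + \<Sum>\<^sub>k \<pi>\<^sub>k exp (\<eta>\<^sub>k(w) - \<eta>\<^sub>k(w\<^sup>s))\<close>. Writing
  \<open>\<eta>\<^sub>k(w) - \<eta>\<^sub>k(w\<^sup>s)\<close> as the average of the \<open>p + 1\<close> terms \<open>(p + 1) x\<^sub>i\<^sub>j (w\<^sub>k\<^sub>j - w\<^sup>s\<^sub>k\<^sub>j)\<close>,
  convexity of \<open>exp\<close> separates the coordinates. At \<open>w = w\<^sup>s\<close> every inequality is tight
  because the gating probabilities sum to \<open>1 - 1 / C\<close>.\<close>

lemma exp_sum_le_mean_exp_card_mult:
  fixes y :: "'a \<Rightarrow> real"
  assumes "finite A" and "A \<noteq> {}"
  shows "exp (\<Sum>j\<in>A. y j) \<le> (\<Sum>j\<in>A. exp (real (card A) * y j)) / real (card A)"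
proof -
  define c where "c = real (card A)"
  have c: "c > 0" using assms by (simp add: c_def card_gt_0_iff)
  have "exp (\<Sum>j\<in>A. (1 / c) *\<^sub>R (c * y j)) \<le> (\<Sum>j\<in>A. (1 / c) * exp (c * y j))"
    using assms c by (intro convex_on_sum[OF _ _ exp_convex]) (auto simp: c_def)
  with c show ?thesis
    by (simp add: c_def[symmetric] sum_divide_distrib)
qed

lemma ln_one_plus_sum_exp_le_tangent:
  fixes u v :: "'a \<Rightarrow> real" and S :: "'a set"
  defines "C \<equiv> 1 + (\<Sum>k\<in>S. exp (v k))"
  shows "ln (1 + (\<Sum>k\<in>S. exp (u k)))
           \<le> ln C - 1 + 1 / C + (\<Sum>k\<in>S. exp (v k) / C * exp (u k - v k))"
proof -
  define D where "D = 1 + (\<Sum>k\<in>S. exp (u k))"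
  have C: "C > 0" and D: "D > 0"
    unfolding C_def D_def by (intro add_pos_nonneg zero_less_one sum_nonneg; simp)+
  have "D / C = 1 / C + (\<Sum>k\<in>S. exp (v k) / C * exp (u k - v k))"
    using C by (simp add: D_def add_divide_distrib sum_divide_distrib exp_diff)
  moreover have "ln D - ln C \<le> (D - C) / C"
    by (rule ln_diff_le[OF D C])
  ultimately show ?thesis
    using C by (simp add: D_def diff_divide_distrib)
qed

lemma lin_diff_eq_sum_xaug:
  "lin p x w i k - lin p x ws i k = (\<Sum>j=0..p. xaug x i j * (w k j - ws k j))"
proof -
  have "(\<Sum>j=1..p. xaug x i j * (w k j - ws k j))
          = (\<Sum>j=1..p. x i j * w k j) - (\<Sum>j=1..p. x i j * ws k j)"
    by (simp add: xaug_def sum_subtractf[symmetric] algebra_simps)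
  then show ?thesis
    by (simp add: sum.atLeast_Suc_atMost lin_def xaug_def)
qed

lemma exp_lin_diff_le:
  "exp (lin p x w i k - lin p x ws i k)
     \<le> (\<Sum>j=0..p. exp (real (p + 1) * xaug x i j * (w k j - ws k j))) / real (p + 1)"
  using exp_sum_le_mean_exp_card_mult[of "{0..p}" "\<lambda>j. xaug x i j * (w k j - ws k j)"]
  by (simp add: lin_diff_eq_sum_xaug mult.assoc del: of_nat_Suc)

lemma Cm_pos: "Cm p K x ws i > 0"
  unfolding Cm_def by (intro add_pos_nonneg zero_less_one sum_nonneg) simp

lemma sum_gate: "(\<Sum>k=1..K-1. gate p K x ws i k) = 1 - 1 / Cm p K x ws i"
proof -
  have "(\<Sum>k=1..K-1. gate p K x ws i k) = (Cm p K x ws i - 1) / Cm p K x ws i"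
    by (simp add: gate_def Cm_def sum_divide_distrib)
  with Cm_pos[of p K x ws i] show ?thesis
    by (simp add: diff_divide_distrib)
qed

definition G1_summand ::
    "nat \<Rightarrow> nat \<Rightarrow> (nat \<Rightarrow> nat \<Rightarrow> real) \<Rightarrow> (nat \<Rightarrow> nat \<Rightarrow> real) \<Rightarrow> (nat \<Rightarrow> nat \<Rightarrow> real)
       \<Rightarrow> nat \<Rightarrow> real" where
  "G1_summand p K x w ws i =
     - (\<Sum>k=1..K-1. gate p K x ws i k / real (p + 1) *
          (\<Sum>j=0..p. exp (real (p + 1) * xaug x i j * (w k j - ws k j))))
     - ln (Cm p K x ws i) + 1 - 1 / Cm p K x ws i"

lemma G1_eq_sum_G1_summand: "G1 n p K x w ws = (\<Sum>i=1..n. G1_summand p K x w ws i)"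
  by (simp add: G1_def G1_summand_def)

lemma G1_summand_le:
  "G1_summand p K x w ws i \<le> - ln (1 + (\<Sum>k=1..K-1. exp (lin p x w i k)))"
proof -
  have gate_nonneg: "gate p K x ws i k \<ge> 0" for k
    using Cm_pos[of p K x ws i] by (simp add: gate_def)
  have "(\<Sum>k=1..K-1. exp (lin p x ws i k) / Cm p K x ws i * exp (lin p x w i k - lin p x ws i k))
          \<le> (\<Sum>k=1..K-1. gate p K x ws i k / real (p + 1) *
               (\<Sum>j=0..p. exp (real (p + 1) * xaug x i j * (w k j - ws k j))))"
    using mult_left_mono[OF exp_lin_diff_le gate_nonneg]
    by (intro sum_mono) (simp add: gate_def)
  with ln_one_plus_sum_exp_le_tangent[of "lin p x w i" "{1..K-1}" "lin p x ws i"] show ?thesis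
    by (simp add: G1_summand_def Cm_def)
qed

lemma G1_summand_self: "G1_summand p K x ws ws i = - ln (Cm p K x ws i)"
  using sum_gate[of p K x ws i] by (simp add: G1_summand_def)

theorem theorem1:
  fixes n p K :: nat and x :: "nat \<Rightarrow> nat \<Rightarrow> real" and ws :: "nat \<Rightarrow> nat \<Rightarrow> real"
  assumes "n \<ge> 1" and "p \<ge> 1" and "K \<ge> 2"
  shows "minorizes (\<lambda>w. G1 n p K x w ws) (I1 n p K x) ws"
  unfolding minorizes_def
proof (intro conjI allI)
  fix w
  have "G1 n p K x w ws \<le> (\<Sum>i=1..n. - ln (1 + (\<Sum>k=1..K-1. exp (lin p x w i k))))"
    unfolding G1_eq_sum_G1_summand by (intro sum_mono G1_summand_le)
  then show "G1 n p K x w ws \<le> I1 n p K x w"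
    by (simp add: I1_def sum_negf)
next
  show "I1 n p K x ws = G1 n p K x ws ws"
    by (simp add: I1_def G1_eq_sum_G1_summand G1_summand_self Cm_def sum_negf)
qed

end
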